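(* There is a deterministic algorithm which, given an integer $k$ and $n$ elements with $3 \le k \le \log_2\log_2 n$, finds a $k$-max of the elements using $O(n^{1 + 1/(3\cdot 2^{k-2} - 1)})$ comparisons (the constant in the $O(\cdot)$ being absolute).
   Context: Model of imprecise comparisons: there are $n$ elements, each with a fixed unknown real value; we identify an element with its value. Asked to compare $x_i$ and $x_j$, the comparator answers either "$x_i \ge x_j$" or "$x_j \ge x_i$". If $|x_i-x_j|>1$ the answer is correct; if $|x_i-x_j|\le 1$ the answer is arbitrary (possibly adversarial and adaptive). An element $x$ is $k$-greater than $y$ if $x \ge y-k$. A $k$-max (of the set of all input elements) is an element that is $k$-greater than every other input element. Bounds on comparisons are worst case over inputs and comparator behaviours. *)

theory Defs
  imports Complex_Main
begin

text \<open>Deterministic comparison algorithms as decision trees over element indices.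
  Query i j t1 t2: ask the comparator about x_i and x_j; on answer "x_i >= x_j"
  continue with t1, on answer "x_j >= x_i" continue with t2.\<close>
datatype alg = Leaf nat | Query nat nat alg alg

fun wf_alg :: "nat \<Rightarrow> alg \<Rightarrow> bool" where
  "wf_alg n (Leaf m) = (m < n)"
| "wf_alg n (Query i j t1 t2) = (i < n \<and> j < n \<and> wf_alg n t1 \<and> wf_alg n t2)"

text \<open>All possible (output, number of comparisons) pairs of a run on values x, over all
  admissible comparator behaviours: an answer is forced to be correct when the two
  values differ by more than 1, and is arbitrary (adversarial, adaptive) otherwise.\<close>
fun runs :: "(nat \<Rightarrow> real) \<Rightarrow> alg \<Rightarrow> (nat \<times> nat) set" where
  "runs x (Leaf m) = {(m, 0)}"
| "runs x (Query i j t1 t2) =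
     (\<lambda>(m, c). (m, Suc c)) `
       ((if x j - x i > 1 then {} else runs x t1) \<union>
        (if x i - x j > 1 then {} else runs x t2))"

definition k_greater :: "real \<Rightarrow> real \<Rightarrow> real \<Rightarrow> bool" where
  "k_greater k y z \<longleftrightarrow> y \<ge> z - k"

definition is_k_max :: "real \<Rightarrow> nat \<Rightarrow> (nat \<Rightarrow> real) \<Rightarrow> nat \<Rightarrow> bool" where
  "is_k_max k n x m \<longleftrightarrow> m < n \<and> (\<forall>j<n. k_greater k (x m) (x j))"

end

theory Submission
  imports Defs
begin

text \<open>
  A 2-max is found with \<open>O(n\<^sup>3\<^sup>/\<^sup>2)\<close> comparisons by pivot rounds: a round-robin tournament
  among \<open>\<surd>n\<close> candidates yields a pivot \<open>c\<close> that beats half of them; \<open>c\<close> is then compared with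
  everybody. Every element beaten by \<open>c\<close> is at most \<open>x\<^sub>c + 1\<close>, and every survivor beat \<open>c\<close>, so
  a 2-max of the survivors is a 2-max of all elements.

  For larger \<open>k\<close>, a cover step plays round-robin tournaments in groups of size
  \<open>g \<approx> n\<^sup>1\<^sup>/\<^sup>D\<close>; each winner represents the elements it beat, which leaves at most
  \<open>2n/(g + 1) + g\<close> representatives, every element being within 1 of one of them, at a cost of
  about \<open>g n\<close>. A \<open>(k - 1)\<close>-max of the representatives is a \<open>k\<close>-max of all elements, and
  balancing \<open>g n\<close> against the recursive cost gives \<open>D\<^sub>k = 2 D\<^sub>k\<^sub>-\<^sub>1 + 1\<close> with
  \<open>D\<^sub>2 = 2\<close>, i.e. \<open>D\<^sub>k = 3 \<cdot> 2\<^sup>k\<^sup>-\<^sup>2 - 1\<close>.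
\<close>

text \<open>
  An element \<open>(i, j)\<close> of a record of answers means that the comparator answered
  \<open>x\<^sub>i \<ge> x\<^sub>j\<close>. Algorithms are written in continuation-passing style: a subroutine hands
  the record extended by its own answers (and its result) to the rest of the decision tree.
\<close>

type_synonym answers = "(nat \<times> nat) set"

definition valid :: "(nat \<Rightarrow> real) \<Rightarrow> alg \<Rightarrow> real \<Rightarrow> (nat \<Rightarrow> bool) \<Rightarrow> bool" where
  "valid x t B Q \<longleftrightarrow> (\<forall>(m, c) \<in> runs x t. real c \<le> B \<and> Q m)"

lemma valid_Leaf: "0 \<le> B \<Longrightarrow> Q m \<Longrightarrow> valid x (Leaf m) B Q"
  by (simp add: valid_def)

lemma valid_Query:
  assumes "x j \<le> x i + 1 \<Longrightarrow> valid x t1 (B - 1) Q"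
    and "x i \<le> x j + 1 \<Longrightarrow> valid x t2 (B - 1) Q"
  shows "valid x (Query i j t1 t2) B Q"
  using assms unfolding valid_def by (fastforce split: if_splits)

lemma valid_weaken:
  assumes "valid x t B Q" "B \<le> B'" "\<And>m. Q m \<Longrightarrow> Q' m"
  shows "valid x t B' Q'"
  using assms unfolding valid_def by fastforce

definition consistent :: "(nat \<Rightarrow> real) \<Rightarrow> answers \<Rightarrow> bool" where
  "consistent x R \<longleftrightarrow> (\<forall>(i, j) \<in> R. x j \<le> x i + 1)"

definition compared :: "answers \<Rightarrow> nat \<Rightarrow> nat \<Rightarrow> bool" where
  "compared R i j \<longleftrightarrow> (i, j) \<in> R \<or> (j, i) \<in> R"

fun compare_all :: "(nat \<times> nat) list \<Rightarrow> answers \<Rightarrow> (answers \<Rightarrow> alg) \<Rightarrow> alg" where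
  "compare_all [] R k = k R"
| "compare_all ((i, j) # ps) R k =
     Query i j (compare_all ps (insert (i, j) R) k) (compare_all ps (insert (j, i) R) k)"

lemma valid_compare_all:
  assumes "consistent x R"
    and "\<And>R'. consistent x R' \<Longrightarrow> R \<subseteq> R' \<Longrightarrow> \<forall>(i, j) \<in> set ps. compared R' i j \<Longrightarrow>
           valid x (k R') B Q"
  shows "valid x (compare_all ps R k) (B + length ps) Q"
  using assms
proof (induction ps arbitrary: R)
  case Nil
  then show ?case by simp
next
  case (Cons p ps)
  obtain i j where p: "p = (i, j)" by fastforce
  have IH: "valid x (compare_all ps (insert a R) k) (B + length ps) Q"
    if "consistent x (insert a R)" "a = (i, j) \<or> a = (j, i)" for a
    using that Cons.prems(2) by (intro Cons.IH) (auto simp: p compared_def)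
  have "valid x
      (Query i j (compare_all ps (insert (i, j) R) k) (compare_all ps (insert (j, i) R) k))
      (B + length ps + 1) Q"
    using Cons.prems(1) by (intro valid_Query) (auto intro!: IH simp: consistent_def)
  then show ?case by (simp add: p algebra_simps)
qed

lemma wf_compare_all:
  "\<forall>(i, j) \<in> set ps. i < n \<and> j < n \<Longrightarrow> (\<And>R'. wf_alg n (k R')) \<Longrightarrow> wf_alg n (compare_all ps R k)"
  by (induction ps arbitrary: R) auto

subsection \<open>Round-robin tournaments\<close>

fun all_pairs :: "nat list \<Rightarrow> (nat \<times> nat) list" where
  "all_pairs [] = []"
| "all_pairs (a # as) = map (Pair a) as @ all_pairs as"

lemma set_all_pairs_subset: "set (all_pairs xs) \<subseteq> set xs \<times> set xs"
  by (induction xs) auto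

lemma all_pairs_cover:
  "i \<in> set xs \<Longrightarrow> j \<in> set xs \<Longrightarrow> i \<noteq> j \<Longrightarrow> (i, j) \<in> set (all_pairs xs) \<or> (j, i) \<in> set (all_pairs xs)"
  by (induction xs) auto

lemma length_all_pairs:
  "real (length (all_pairs xs)) = real (length xs) * (real (length xs) - 1) / 2"
  by (induction xs) (auto simp: field_simps)

definition survivors :: "answers \<Rightarrow> nat \<Rightarrow> nat list \<Rightarrow> nat list" where
  "survivors R c V = filter (\<lambda>j. j \<noteq> c \<and> (c, j) \<notin> R) V"

lemma length_survivors_antimono:
  "R \<subseteq> R' \<Longrightarrow> length (survivors R' c V) \<le> length (survivors R c V)"
  unfolding survivors_def by (induction V) auto

text \<open>Of the two orientations of a compared pair, at most one is missing from the record.\<close>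

lemma sum_card_unbeaten_le:
  assumes "finite A" and all: "\<forall>a \<in> A. \<forall>b \<in> A. a \<noteq> b \<longrightarrow> compared R a b"
  shows "2 * (\<Sum>c \<in> A. card {j \<in> A. j \<noteq> c \<and> (c, j) \<notin> R}) + card A \<le> card A * card A"
proof -
  define Off where "Off = {p \<in> A \<times> A. fst p \<noteq> snd p}"
  have fin: "finite Off" using \<open>finite A\<close> by (simp add: Off_def)
  have "Off - R \<subseteq> prod.swap ` (Off \<inter> R)"
  proof
    fix p assume "p \<in> Off - R"
    then have "prod.swap p \<in> Off \<inter> R" using all by (cases p) (auto simp: Off_def compared_def)
    then show "p \<in> prod.swap ` (Off \<inter> R)" by (rule rev_image_eqI) simp
  qed
  then have "card (Off - R) \<le> card (prod.swap ` (Off \<inter> R))"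
    using fin by (intro card_mono) auto
  also have "\<dots> \<le> card (Off \<inter> R)" by (rule card_image_le) (use fin in simp)
  finally have "card (Off - R) \<le> card (Off \<inter> R)" .
  moreover have "card Off = card (Off \<inter> R) + card (Off - R)" using fin by (rule card_Int_Diff)
  moreover have "card Off + card A = card A * card A"
  proof -
    have "A \<times> A = Off \<union> (\<lambda>a. (a, a)) ` A" "Off \<inter> (\<lambda>a. (a, a)) ` A = {}"
      by (auto simp: Off_def)
    then have "card (A \<times> A) = card Off + card ((\<lambda>a. (a, a)) ` A)"
      using fin \<open>finite A\<close> by (simp add: card_Un_disjoint)
    then show ?thesis by (simp add: card_cartesian_product card_image inj_on_def)
  qed
  moreover have "card (Off - R) = (\<Sum>c \<in> A. card {j \<in> A. j \<noteq> c \<and> (c, j) \<notin> R})"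
  proof -
    have "Off - R = Sigma A (\<lambda>c. {j \<in> A. j \<noteq> c \<and> (c, j) \<notin> R})" by (auto simp: Off_def)
    then show ?thesis using \<open>finite A\<close> by (simp add: card_SigmaI)
  qed
  ultimately show ?thesis by linarith
qed

lemma exists_few_unbeaten:
  assumes "finite A" "A \<noteq> {}" "\<forall>a \<in> A. \<forall>b \<in> A. a \<noteq> b \<longrightarrow> compared R a b"
  shows "\<exists>c \<in> A. 2 * card {j \<in> A. j \<noteq> c \<and> (c, j) \<notin> R} + 1 \<le> card A"
proof (rule ccontr)
  assume "\<not> ?thesis"
  then have "(\<Sum>c \<in> A. card A) \<le> (\<Sum>c \<in> A. 2 * card {j \<in> A. j \<noteq> c \<and> (c, j) \<notin> R})"
    by (intro sum_mono) auto
  then have "card A * card A + card A \<le> card A * card A"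
    using sum_card_unbeaten_le[OF assms(1,3)] by (simp add: sum_distrib_left)
  moreover have "0 < card A" using assms(1,2) by (simp add: card_gt_0_iff)
  ultimately show False by simp
qed

definition pick :: "nat list \<Rightarrow> answers \<Rightarrow> nat" where
  "pick S R = arg_min_on (\<lambda>c. length (survivors R c S)) (set S)"

lemma pick_in: "S \<noteq> [] \<Longrightarrow> pick S R \<in> set S"
  unfolding pick_def by (rule arg_min_if_finite) auto

lemma pick_few_survivors:
  assumes "distinct S" "S \<noteq> []" "\<forall>a \<in> set S. \<forall>b \<in> set S. a \<noteq> b \<longrightarrow> compared R a b"
  shows "2 * length (survivors R (pick S R) S) + 1 \<le> length S"
proof -
  have len: "length (survivors R c S) = card {j \<in> set S. j \<noteq> c \<and> (c, j) \<notin> R}" for c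
    using \<open>distinct S\<close> unfolding survivors_def
    by (simp add: distinct_length_filter Int_def conj_commute)
  obtain c where "c \<in> set S" "2 * length (survivors R c S) + 1 \<le> length S"
    using exists_few_unbeaten[of "set S" R] assms by (auto simp: len distinct_card)
  moreover have "length (survivors R (pick S R) S) \<le> length (survivors R c S)"
    unfolding pick_def using \<open>c \<in> set S\<close> by (intro arg_min_least) auto
  ultimately show ?thesis by linarith
qed

definition tournament :: "nat list \<Rightarrow> answers \<Rightarrow> (nat \<Rightarrow> answers \<Rightarrow> alg) \<Rightarrow> alg" where
  "tournament S R k = compare_all (all_pairs S) R (\<lambda>R'. k (pick S R') R')"

lemma valid_tournament:
  assumes "distinct S" "S \<noteq> []" "consistent x R"
    and "\<And>c R'. consistent x R' \<Longrightarrow> R \<subseteq> R' \<Longrightarrow> c \<in> set S \<Longrightarrow>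
           \<forall>j \<in> set S. j \<noteq> c \<longrightarrow> compared R' c j \<Longrightarrow>
           2 * length (survivors R' c S) + 1 \<le> length S \<Longrightarrow> valid x (k c R') B Q"
  shows "valid x (tournament S R k) (B + real (length S) * (real (length S) - 1) / 2) Q"
proof -
  have "valid x (compare_all (all_pairs S) R (\<lambda>R'. k (pick S R') R')) (B + length (all_pairs S)) Q"
  proof (rule valid_compare_all[OF assms(3)])
    fix R' assume R': "consistent x R'" "R \<subseteq> R'" "\<forall>(i, j) \<in> set (all_pairs S). compared R' i j"
    have all: "\<forall>a \<in> set S. \<forall>b \<in> set S. a \<noteq> b \<longrightarrow> compared R' a b"
    proof (intro ballI impI)
      fix a b assume "a \<in> set S" "b \<in> set S" "a \<noteq> b"
      then have "(a, b) \<in> set (all_pairs S) \<or> (b, a) \<in> set (all_pairs S)" by (rule all_pairs_cover)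
      then show "compared R' a b" using R'(3) by (auto simp: compared_def)
    qed
    show "valid x (k (pick S R') R') B Q"
    proof (rule assms(4)[OF R'(1,2)])
      show "pick S R' \<in> set S" using assms(2) by (rule pick_in)
      then show "\<forall>j \<in> set S. j \<noteq> pick S R' \<longrightarrow> compared R' (pick S R') j" by (simp add: all)
      show "2 * length (survivors R' (pick S R') S) + 1 \<le> length S"
        using assms(1,2) all by (rule pick_few_survivors)
    qed
  qed
  then show ?thesis by (simp only: tournament_def length_all_pairs)
qed

lemma wf_tournament:
  assumes "S \<noteq> []" "set S \<subseteq> {..<n}" "\<And>c R'. c \<in> set S \<Longrightarrow> wf_alg n (k c R')"
  shows "wf_alg n (tournament S R k)"
  unfolding tournament_def
proof (rule wf_compare_all)
  show "\<forall>(i, j) \<in> set (all_pairs S). i < n \<and> j < n"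
    using assms(2) set_all_pairs_subset[of S] by fastforce
  show "wf_alg n (k (pick S R') R')" for R'
    using assms(1) by (intro assms(3) pick_in)
qed

subsection \<open>Finding a 2-max\<close>

definition approx_max :: "(nat \<Rightarrow> real) \<Rightarrow> real \<Rightarrow> nat set \<Rightarrow> nat \<Rightarrow> bool" where
  "approx_max x d A w \<longleftrightarrow> w \<in> A \<and> (\<forall>z \<in> A. x z \<le> x w + d)"

lemma approx_max_mono: "approx_max x d A w \<Longrightarrow> d \<le> d' \<Longrightarrow> approx_max x d' A w"
  unfolding approx_max_def by force

lemma not_survivor_le:
  "consistent x R \<Longrightarrow> z \<in> set V \<Longrightarrow> z \<notin> set (survivors R c V) \<Longrightarrow> x z \<le> x c + 1"
  unfolding consistent_def survivors_def by auto

lemma survivors_Nil_approx_max: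
  "consistent x R \<Longrightarrow> c \<in> set V \<Longrightarrow> survivors R c V = [] \<Longrightarrow> approx_max x 1 (set V) c"
  unfolding approx_max_def using not_survivor_le by fastforce

lemma approx_max_survivors:
  assumes "consistent x R" and cmp: "\<forall>j \<in> set V. j \<noteq> c \<longrightarrow> compared R c j"
    and w: "approx_max x 2 (set (survivors R c V)) w"
  shows "approx_max x 2 (set V) w"
proof -
  have "w \<in> set V" "w \<noteq> c" "(c, w) \<notin> R" using w by (auto simp: approx_max_def survivors_def)
  then have "(w, c) \<in> R" using cmp by (auto simp: compared_def)
  then have "x c \<le> x w + 1" using assms(1) by (auto simp: consistent_def)
  then show ?thesis
    using w \<open>w \<in> set V\<close> not_survivor_le[OF assms(1)] unfolding approx_max_def by force
qed

lemma length_survivors_round: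
  assumes "R1 \<subseteq> R2" "2 * length (survivors R1 c S) + 1 \<le> length S"
  shows "2 * length (survivors R2 c (S @ T)) + length S + 1 \<le> 2 * length (S @ T)"
proof -
  have "length (survivors R2 c (S @ T)) \<le> length (survivors R1 c S) + length T"
    using length_survivors_antimono[OF assms(1), of c S] length_filter_le[of _ T]
    by (simp add: survivors_def add_mono)
  then show ?thesis using assms(2) by simp
qed

definition pivot_round :: "nat \<Rightarrow> nat list \<Rightarrow> answers \<Rightarrow> (nat \<Rightarrow> answers \<Rightarrow> alg) \<Rightarrow> alg" where
  "pivot_round s V R k =
     tournament (take s V) R (\<lambda>c R1. compare_all (map (Pair c) (drop s V)) R1 (k c))"

lemma valid_pivot_round:
  assumes "distinct V" "V \<noteq> []" "1 \<le> s" "consistent x R"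
    and "\<And>c R'. consistent x R' \<Longrightarrow> c \<in> set V \<Longrightarrow> \<forall>j \<in> set V. j \<noteq> c \<longrightarrow> compared R' c j \<Longrightarrow>
           2 * length (survivors R' c V) + length (take s V) + 1 \<le> 2 * length V \<Longrightarrow>
           valid x (k c R') B Q"
  shows "valid x (pivot_round s V R k)
           (B + real (length (drop s V))
              + real (length (take s V)) * (real (length (take s V)) - 1) / 2) Q"
proof -
  define S T where "S = take s V" and "T = drop s V"
  have "valid x (tournament S R (\<lambda>c R1. compare_all (map (Pair c) T) R1 (k c)))
      (B + real (length T) + real (length S) * (real (length S) - 1) / 2) Q"
  proof (rule valid_tournament)
    show "distinct S" "S \<noteq> []" using assms(1-3) by (auto simp: S_def)
    show "consistent x R" by (rule assms(4))
    fix c R1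
    assume R1: "consistent x R1" "R \<subseteq> R1" "c \<in> set S" "\<forall>j \<in> set S. j \<noteq> c \<longrightarrow> compared R1 c j"
      "2 * length (survivors R1 c S) + 1 \<le> length S"
    have "valid x (compare_all (map (Pair c) T) R1 (k c)) (B + real (length (map (Pair c) T))) Q"
    proof (rule valid_compare_all[OF R1(1)])
      fix R2
      assume R2: "consistent x R2" "R1 \<subseteq> R2" "\<forall>(i, j) \<in> set (map (Pair c) T). compared R2 i j"
      have V: "V = S @ T" by (simp add: S_def T_def)
      show "valid x (k c R2) B Q"
      proof (rule assms(5)[OF R2(1)])
        show "c \<in> set V" using R1(3) V by simp
        show "\<forall>j \<in> set V. j \<noteq> c \<longrightarrow> compared R2 c j"
          using R1(4) R2(2,3) V by (auto simp: compared_def)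
        have "2 * length (survivors R2 c (S @ T)) + length S + 1 \<le> 2 * length (S @ T)"
          by (rule length_survivors_round[OF R2(2) R1(5)])
        then show "2 * length (survivors R2 c V) + length (take s V) + 1 \<le> 2 * length V"
          by (simp add: S_def T_def)
      qed
    qed
    then show "valid x (compare_all (map (Pair c) T) R1 (k c)) (B + real (length T)) Q" by simp
  qed
  then show ?thesis by (simp add: pivot_round_def S_def T_def)
qed

lemma wf_pivot_round:
  assumes "1 \<le> s" "V \<noteq> []" "set V \<subseteq> {..<n}" "\<And>c R'. c < n \<Longrightarrow> wf_alg n (k c R')"
  shows "wf_alg n (pivot_round s V R k)"
  unfolding pivot_round_def
proof (rule wf_tournament)
  show "take s V \<noteq> []" "set (take s V) \<subseteq> {..<n}"
    using assms(1-3) set_take_subset[of s V] by auto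
  fix c R1 assume "c \<in> set (take s V)"
  then have "c < n" using assms(3) set_take_subset[of s V] by auto
  then show "wf_alg n (compare_all (map (Pair c) (drop s V)) R1 (k c))"
    using assms(3,4) set_drop_subset[of s V] by (intro wf_compare_all) auto
qed

text \<open>The first argument is fuel; every round removes the pivot, so \<open>length V\<close> suffices.\<close>

primrec find_2max :: "nat \<Rightarrow> nat \<Rightarrow> nat list \<Rightarrow> answers \<Rightarrow> alg" where
  "find_2max 0 s V R = Leaf 0"
| "find_2max (Suc f) s V R = (if V = [] then Leaf 0 else
     pivot_round s V R (\<lambda>c R'.
       let L = survivors R' c V in if L = [] then Leaf c else find_2max f s L R'))"

definition find_2max_cost :: "nat \<Rightarrow> real \<Rightarrow> real" where
  "find_2max_cost s N = N * real s + 2 * N\<^sup>2 / (real s + 1)"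

lemma find_2max_cost_nonneg: "0 \<le> N \<Longrightarrow> 0 \<le> find_2max_cost s N"
  unfolding find_2max_cost_def by simp

lemma find_2max_cost_mono: "0 \<le> l \<Longrightarrow> l \<le> N \<Longrightarrow> find_2max_cost s l \<le> find_2max_cost s N"
  unfolding find_2max_cost_def
  by (intro add_mono mult_right_mono divide_right_mono mult_left_mono power_mono) auto

lemma find_2max_cost_step:
  fixes s :: nat and N t l :: real
  assumes t: "t = min (real s) N" "1 \<le> t" and l: "0 \<le> l" "2 * l + t + 1 \<le> 2 * N"
  shows "t * (t - 1) / 2 + (N - t) + find_2max_cost s l \<le> find_2max_cost s N"
proof -
  define a where "a = (t + 1) / 2"
  have "l \<le> N - a" using l(2) unfolding a_def by (simp add: field_simps)
  then have "find_2max_cost s l \<le> find_2max_cost s (N - a)"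
    using l(1) by (rule find_2max_cost_mono[rotated])
  moreover have "find_2max_cost s N - find_2max_cost s (N - a)
      = real s * a + 2 * (2 * N * a - a\<^sup>2) / (real s + 1)"
  proof -
    have "find_2max_cost s N - find_2max_cost s (N - a)
        = real s * a + (2 * N\<^sup>2 - 2 * (N - a)\<^sup>2) / (real s + 1)"
      unfolding find_2max_cost_def by (simp add: diff_divide_distrib algebra_simps)
    moreover have "2 * N\<^sup>2 - 2 * (N - a)\<^sup>2 = 2 * (2 * N * a - a\<^sup>2)"
      by (simp add: power2_eq_square algebra_simps)
    ultimately show ?thesis by simp
  qed
  moreover have "t * (t - 1) / 2 + (N - t) \<le> real s * a + 2 * (2 * N * a - a\<^sup>2) / (real s + 1)"
  proof (cases "t = real s")
    case True
    then have "real s * a + 2 * (2 * N * a - a\<^sup>2) / (real s + 1) - (t * (t - 1) / 2 + (N - t))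
        = N + 3 * real s / 2 - 1 / 2"
      unfolding a_def by (simp add: field_simps power2_eq_square)
    then show ?thesis using t by linarith
  next
    case False
    then have "t = N" "t \<le> real s" using t by auto
    then have "0 \<le> 2 * N * a - a\<^sup>2"
      using t unfolding a_def
      by (simp add: power2_eq_square field_simps) (use mult_nonneg_nonneg[of N N] in linarith)
    moreover have "t * (t - 1) / 2 + (N - t) \<le> real s * a"
      using \<open>t = N\<close> \<open>t \<le> real s\<close> \<open>1 \<le> t\<close> mult_right_mono[OF \<open>t \<le> real s\<close>, of a]
      unfolding a_def by (simp add: field_simps)
    ultimately show ?thesis by (simp add: add_increasing2)
  qed
  ultimately show ?thesis by linarith
qed

lemma valid_find_2max:
  assumes "length V \<le> f" "distinct V" "V \<noteq> []" "1 \<le> s" "consistent x R"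
  shows "valid x (find_2max f s V R) (find_2max_cost s (length V)) (approx_max x 2 (set V))"
  using assms
proof (induction f arbitrary: V R)
  case 0
  then show ?case by simp
next
  case (Suc f)
  define N t where "N = real (length V)" and "t = real (length (take s V))"
  have t: "t = min (real s) N" "1 \<le> t"
    using Suc.prems(3,4) by (auto simp: t_def N_def min_def Suc_le_eq)
  define B where "B = find_2max_cost s N - t * (t - 1) / 2 - (N - t)"
  have "valid x (pivot_round s V R (\<lambda>c R'.
      let L = survivors R' c V in if L = [] then Leaf c else find_2max f s L R'))
      (B + real (length (drop s V)) + t * (t - 1) / 2) (approx_max x 2 (set V))"
    unfolding t_def
  proof (rule valid_pivot_round[OF Suc.prems(2-5)])
    fix c R' assume R': "consistent x R'" "c \<in> set V" "\<forall>j \<in> set V. j \<noteq> c \<longrightarrow> compared R' c j"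
      "2 * length (survivors R' c V) + length (take s V) + 1 \<le> 2 * length V"
    define L where "L = survivors R' c V"
    have cost: "find_2max_cost s (length L) \<le> B"
      using find_2max_cost_step[OF t, of "length L"] R'(4) by (simp add: B_def t_def N_def L_def)
    have "valid x (if L = [] then Leaf c else find_2max f s L R') B (approx_max x 2 (set V))"
    proof (cases "L = []")
      case True
      then have "approx_max x 1 (set V) c"
        using R'(1,2) unfolding L_def by (intro survivors_Nil_approx_max)
      moreover have "0 \<le> B" using cost find_2max_cost_nonneg[of "real (length L)" s] by simp
      ultimately show ?thesis using True by (simp add: valid_Leaf approx_max_mono)
    next
      case False
      have "valid x (find_2max f s L R') (find_2max_cost s (length L)) (approx_max x 2 (set L))"
        using Suc.prems(1,2,4) R'(1,4) False unfolding L_def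
        by (intro Suc.IH) (simp_all add: survivors_def)
      then have "valid x (find_2max f s L R') B (approx_max x 2 (set V))"
        by (rule valid_weaken[OF _ cost])
          (use approx_max_survivors[OF R'(1,3)] in \<open>simp add: L_def\<close>)
      then show ?thesis using False by simp
    qed
    then show "valid x (let L = survivors R' c V in if L = [] then Leaf c else find_2max f s L R') B
        (approx_max x 2 (set V))"
      unfolding Let_def L_def .
  qed
  moreover have "real (length (drop s V)) = N - t" by (simp add: N_def t_def)
  ultimately show ?case using Suc.prems(3) by (simp add: B_def N_def)
qed

lemma wf_find_2max: "0 < n \<Longrightarrow> 1 \<le> s \<Longrightarrow> set V \<subseteq> {..<n} \<Longrightarrow> wf_alg n (find_2max f s V R)"
proof (induction f arbitrary: V R)
  case 0
  then show ?case by simp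
next
  case (Suc f)
  have "set (survivors R' c V) \<subseteq> {..<n}" for R' c
    using Suc.prems(3) by (auto simp: survivors_def)
  then show ?case
    using Suc by (cases "V = []") (auto simp: Let_def intro!: wf_pivot_round)
qed

definition find_2max_sqrt :: "nat list \<Rightarrow> answers \<Rightarrow> alg" where
  "find_2max_sqrt V = find_2max (length V) (nat \<lceil>sqrt (length V)\<rceil>) V"

lemma find_2max_cost_sqrt:
  fixes N :: real
  assumes "1 \<le> N"
  shows "find_2max_cost (nat \<lceil>sqrt N\<rceil>) N \<le> 4 * N powr (3 / 2)"
proof -
  define q s where "q = sqrt N" and "s = nat \<lceil>q\<rceil>"
  have q: "1 \<le> q" "N = q * q" using assms by (simp_all add: q_def)
  have s: "q \<le> real s" "real s \<le> 2 * q" using q(1) unfolding s_def by linarith+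
  have "N * real s \<le> 2 * (N * q)" using mult_left_mono[OF s(2), of N] assms by simp
  moreover have "2 * N\<^sup>2 / (real s + 1) \<le> 2 * N\<^sup>2 / q"
    using s(1) q(1) by (intro divide_left_mono) auto
  moreover have "2 * N\<^sup>2 / q = 2 * (N * q)" using q by (simp add: power2_eq_square)
  moreover have "N powr (3 / 2) = N * q"
  proof -
    have "N powr (3 / 2) = N powr (1 + 1 / 2)" by simp
    also have "\<dots> = N powr 1 * N powr (1 / 2)" by (simp only: powr_add)
    finally show ?thesis using assms by (simp add: q_def powr_half_sqrt)
  qed
  ultimately show ?thesis unfolding find_2max_cost_def s_def q_def by linarith
qed

lemma one_le_nat_ceiling: "0 < (y::real) \<Longrightarrow> 1 \<le> nat \<lceil>y\<rceil>"
  by linarith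

lemma valid_find_2max_sqrt:
  assumes "distinct V" "V \<noteq> []" "consistent x R"
  shows "valid x (find_2max_sqrt V R) (4 * real (length V) powr (3 / 2)) (approx_max x 2 (set V))"
proof -
  have "1 \<le> real (length V)" using assms(2) by (simp add: Suc_le_eq)
  then show ?thesis
    unfolding find_2max_sqrt_def using assms find_2max_cost_sqrt
    by (intro valid_weaken[OF valid_find_2max] one_le_nat_ceiling) auto
qed

lemma wf_find_2max_sqrt: "0 < n \<Longrightarrow> set V \<subseteq> {..<n} \<Longrightarrow> wf_alg n (find_2max_sqrt V R)"
  unfolding find_2max_sqrt_def
  by (cases "V = []") (auto intro!: wf_find_2max one_le_nat_ceiling)

subsection \<open>Covering by few representatives\<close>

definition covers :: "(nat \<Rightarrow> real) \<Rightarrow> nat list \<Rightarrow> nat set \<Rightarrow> bool" where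
  "covers x C A \<longleftrightarrow> (\<forall>z \<in> A. \<exists>c \<in> set C. x z \<le> x c + 1)"

lemma covers_self: "covers x C (set C)"
  unfolding covers_def by force

lemma approx_max_covers:
  "covers x C A \<Longrightarrow> set C \<subseteq> A \<Longrightarrow> approx_max x d (set C) w \<Longrightarrow> approx_max x (d + 1) A w"
  unfolding covers_def approx_max_def by force

text \<open>
  The representatives are collected in front of the continuation's argument: the winner \<open>c\<close>
  of each group represents the group members it beat, the others return to the pool.
\<close>

primrec cover :: "nat \<Rightarrow> nat \<Rightarrow> nat list \<Rightarrow> answers \<Rightarrow> (nat list \<Rightarrow> answers \<Rightarrow> alg) \<Rightarrow> alg" where
  "cover 0 g P R k = k P R"
| "cover (Suc f) g P R k = (if length P < g then k P R else
     tournament (take g P) R (\<lambda>c R1.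
       cover f g (survivors R1 c (take g P) @ drop g P) R1 (\<lambda>C. k (c # C))))"

lemma covers_Cons_survivors:
  "consistent x R \<Longrightarrow> covers x C (set (survivors R c G @ T)) \<Longrightarrow> covers x (c # C) (set (G @ T))"
  unfolding covers_def using not_survivor_le[of x R _ G c] by fastforce

lemma cover_step_bounds:
  fixes p p' g :: real
  assumes "2 * p' + g + 1 \<le> 2 * p" "1 \<le> g"
  shows "(g - 1) * p' + g * (g - 1) / 2 \<le> (g - 1) * p"
    and "2 * p' / (g + 1) + 1 \<le> 2 * p / (g + 1)"
proof -
  have "(g - 1) * (2 * p') \<le> (g - 1) * (2 * p - g - 1)"
    using assms by (intro mult_left_mono) auto
  then have "(g - 1) * p' \<le> (g - 1) * (2 * p - g - 1) / 2" by simp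
  also have "\<dots> \<le> (g - 1) * p - g * (g - 1) / 2" using assms(2) by (simp add: field_simps)
  finally show "(g - 1) * p' + g * (g - 1) / 2 \<le> (g - 1) * p" by simp
  have "2 * p' / (g + 1) \<le> (2 * p - (g + 1)) / (g + 1)"
    using assms by (intro divide_right_mono) auto
  also have "\<dots> = 2 * p / (g + 1) - 1" using assms(2) by (simp add: diff_divide_distrib)
  finally show "2 * p' / (g + 1) + 1 \<le> 2 * p / (g + 1)" by simp
qed

lemma valid_cover:
  assumes "length P \<le> f" "distinct P" "1 \<le> g" "consistent x R"
    and "\<And>C R'. consistent x R' \<Longrightarrow> distinct C \<Longrightarrow> set C \<subseteq> set P \<Longrightarrow> covers x C (set P) \<Longrightarrow>
           real (length C) \<le> 2 * real (length P) / (real g + 1) + real g \<Longrightarrow> valid x (k C R') B Q"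
  shows "valid x (cover f g P R k) (B + (real g - 1) * real (length P)) Q"
  using assms
proof (induction f arbitrary: P R k)
  case 0
  then show ?case by (simp add: covers_def)
next
  case (Suc f)
  show ?case
  proof (cases "length P < g")
    case True
    have "real (length P) \<le> real g" using True by simp
    then have "valid x (k P R) B Q"
      using Suc.prems(2,4) by (intro Suc.prems(5)) (auto simp: covers_self add_increasing)
    then show ?thesis using True Suc.prems(3) by (auto elim: valid_weaken)
  next
    case False
    define G T where "G = take g P" and "T = drop g P"
    have P: "P = G @ T" by (simp add: G_def T_def)
    have lenG: "length G = g" using False by (simp add: G_def)
    have round: "valid x (cover f g (survivors R1 c G @ T) R1 (\<lambda>C. k (c # C)))
        (B + (real g - 1) * real (length P) - real g * (real g - 1) / 2) Q"
      if R1: "consistent x R1" "c \<in> set G" "2 * length (survivors R1 c G) + 1 \<le> length G" for c R1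
    proof -
      define P' where "P' = survivors R1 c G @ T"
      have "2 * length P' + g + 1 \<le> 2 * length P" using R1(3) lenG by (simp add: P'_def P)
      then have shrink: "2 * real (length P') + real g + 1 \<le> 2 * real (length P)"
        using of_nat_mono[where 'a=real] by fastforce
      have "1 \<le> real g" using Suc.prems(3) by simp
      note bounds = cover_step_bounds[OF shrink this]
      have "valid x (cover f g P' R1 (\<lambda>C. k (c # C))) (B + (real g - 1) * real (length P')) Q"
      proof (rule Suc.IH)
        show "length P' \<le> f" "distinct P'" "1 \<le> g" "consistent x R1"
          using Suc.prems(1-3) R1(1) shrink by (auto simp: P'_def P survivors_def)
        fix C R' assume C: "consistent x R'" "distinct C" "set C \<subseteq> set P'" "covers x C (set P')"
          "real (length C) \<le> 2 * real (length P') / (real g + 1) + real g"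
        have "c \<notin> set P'" using Suc.prems(2) R1(2) by (auto simp: P'_def P survivors_def)
        moreover have "set P' \<subseteq> set P" by (auto simp: P'_def P survivors_def)
        ultimately show "valid x (k (c # C) R') B Q"
          using C bounds(2) R1(2) covers_Cons_survivors[OF R1(1), of C c G T]
          by (intro Suc.prems(5)) (auto simp: P P'_def)
      qed
      then show ?thesis using bounds(1) unfolding P'_def by (auto elim: valid_weaken)
    qed
    have "valid x (tournament G R (\<lambda>c R1. cover f g (survivors R1 c G @ T) R1 (\<lambda>C. k (c # C))))
        (B + (real g - 1) * real (length P) - real g * (real g - 1) / 2
          + real (length G) * (real (length G) - 1) / 2) Q"
    proof (rule valid_tournament)
      show "distinct G" "G \<noteq> []" using Suc.prems(2,3) lenG by (auto simp: G_def)
      show "consistent x R" by (rule Suc.prems(4))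
      show "valid x (cover f g (survivors R1 c G @ T) R1 (\<lambda>C. k (c # C)))
          (B + (real g - 1) * real (length P) - real g * (real g - 1) / 2) Q"
        if "consistent x R1" "R \<subseteq> R1" "c \<in> set G" "\<forall>j \<in> set G. j \<noteq> c \<longrightarrow> compared R1 c j"
          "2 * length (survivors R1 c G) + 1 \<le> length G" for c R1
        using that(1,3,5) by (rule round)
    qed
    then show ?thesis using False lenG by (simp add: G_def T_def)
  qed
qed

lemma wf_cover:
  "1 \<le> g \<Longrightarrow> set P \<subseteq> {..<n} \<Longrightarrow> (\<And>C R'. set C \<subseteq> {..<n} \<Longrightarrow> wf_alg n (k C R')) \<Longrightarrow>
   wf_alg n (cover f g P R k)"
proof (induction f arbitrary: P R k)
  case 0
  then show ?case by simp
next
  case (Suc f)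
  have "wf_alg n (tournament (take g P) R (\<lambda>c R1.
      cover f g (survivors R1 c (take g P) @ drop g P) R1 (\<lambda>C. k (c # C))))" if "g \<le> length P"
  proof (rule wf_tournament)
    show "take g P \<noteq> []" "set (take g P) \<subseteq> {..<n}"
      using that Suc.prems(1,2) set_take_subset[of g P] by auto
    fix c R1 assume "c \<in> set (take g P)"
    then have "c < n" using Suc.prems(2) set_take_subset[of g P] by auto
    show "wf_alg n (cover f g (survivors R1 c (take g P) @ drop g P) R1 (\<lambda>C. k (c # C)))"
      using Suc.prems \<open>c < n\<close> set_take_subset[of g P] set_drop_subset[of g P]
      by (intro Suc.IH) (auto simp: survivors_def)
  qed
  then show ?case using Suc.prems(2,3) by auto
qed

subsection \<open>Cost estimates\<close>

lemma base_cost_bound: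
  fixes N D :: real
  assumes "1 \<le> N" "2 \<le> D" "D = 2 \<or> N < 1024"
  shows "4 * N powr (3 / 2) \<le> 128 * N powr (1 + 1 / D)"
proof -
  have "N powr (3 / 2) = N powr (1 + 1 / D) * N powr (1 / 2 - 1 / D)"
    using assms(1) by (simp add: powr_add[symmetric])
  moreover have "N powr (1 / 2 - 1 / D) \<le> 32"
  proof (cases "D = 2")
    case True
    then show ?thesis by simp
  next
    case False
    have "N powr (1 / 2 - 1 / D) \<le> N powr (1 / 2)" using assms(1,2) by (intro powr_mono) auto
    also have "\<dots> = sqrt N" using assms(1) by (simp add: powr_half_sqrt)
    also have "\<dots> \<le> sqrt (32\<^sup>2)" using False assms(3) by (intro real_sqrt_le_mono) simp
    finally show ?thesis by simp
  qed
  moreover have "N powr (1 + 1 / D) * N powr (1 / 2 - 1 / D) \<le> N powr (1 + 1 / D) * 32"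
    using calculation(2) by (rule mult_left_mono) simp
  ultimately show ?thesis by simp
qed

lemma six_root_bound:
  fixes N D :: real
  assumes "1024 \<le> N" "5 \<le> D"
  shows "(6 * N powr (1 / D) + 1) * (6 * N powr (1 / D)) \<le> N"
proof -
  define a u where "a = N powr (1 / D)" and "u = N powr (1 / 5)"
  have "1 \<le> a" unfolding a_def using assms by (intro ge_one_powr_ge_zero) auto
  have "a \<le> u" unfolding a_def u_def using assms by (intro powr_mono) auto
  have N: "u ^ 3 * u\<^sup>2 = N"
    unfolding u_def using assms by (simp add: powr_realpow[symmetric] powr_powr powr_add[symmetric])
  have "(4::real) ^ 5 \<le> u ^ 5" using assms(1) N by (simp add: power_add[symmetric])
  then have "4 \<le> u" using power_le_imp_le_base[of 4 4 u] by (simp add: u_def)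
  have "(6 * a + 1) * (6 * a) \<le> (6 * u + 1) * (6 * u)"
    using \<open>1 \<le> a\<close> \<open>a \<le> u\<close> by (intro mult_mono) auto
  also have "\<dots> \<le> 42 * u\<^sup>2"
    using mult_left_mono[of 1 u u] \<open>4 \<le> u\<close> by (simp add: power2_eq_square algebra_simps)
  also have "\<dots> \<le> u ^ 3 * u\<^sup>2"
  proof (rule mult_right_mono)
    have "(4::real) ^ 3 \<le> u ^ 3" using \<open>4 \<le> u\<close> by (intro power_mono) auto
    then show "42 \<le> u ^ 3" by simp
  qed simp
  finally show ?thesis unfolding N a_def .
qed

lemma exponent_identity:
  fixes D :: real
  assumes "0 < D"
  shows "(1 - 1 / (2 * D + 1)) * (1 + 1 / D) = 1 + 1 / (2 * D + 1)"
proof -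
  have "2 * D + 1 \<noteq> 0" "D \<noteq> 0" using assms by auto
  then have "(1 - 1 / (2 * D + 1)) * (1 + 1 / D) = (2 * D) / (2 * D + 1) * ((D + 1) / D)"
    by (simp add: field_simps)
  also have "\<dots> = 2 * (D + 1) / (2 * D + 1)" using \<open>D \<noteq> 0\<close> by simp
  also have "\<dots> = 1 + 1 / (2 * D + 1)" using \<open>2 * D + 1 \<noteq> 0\<close> by (simp add: field_simps)
  finally show ?thesis .
qed

lemma level_cost_bound:
  fixes N M G D :: real
  assumes N: "1024 \<le> N" and D: "2 \<le> D"
    and G: "6 * N powr (1 / (2 * D + 1)) \<le> G" "G \<le> 6 * N powr (1 / (2 * D + 1)) + 1"
    and M: "0 \<le> M" "M \<le> 2 * N / (G + 1) + G"
  shows "(G - 1) * N + 128 * M powr (1 + 1 / D) \<le> 128 * N powr (1 + 1 / (2 * D + 1))"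
proof -
  define a where "a = N powr (1 / (2 * D + 1))"
  have a: "0 < a" using N by (simp add: a_def)
  have Ga: "6 * a \<le> G" "G \<le> 6 * a + 1" using G by (simp_all add: a_def)
  have "2 * N / (G + 1) \<le> 2 * N / (6 * a)"
    using Ga a N by (intro divide_left_mono) (auto intro: mult_pos_pos)
  moreover have "G \<le> N / (6 * a)"
  proof -
    have "G * (6 * a) \<le> (6 * a + 1) * (6 * a)" using Ga(2) a by (intro mult_right_mono) auto
    also have "\<dots> \<le> N" using six_root_bound[OF N, of "2 * D + 1"] D by (simp add: a_def)
    finally show ?thesis using a by (simp add: pos_le_divide_eq)
  qed
  moreover have "2 * N / (6 * a) + N / (6 * a) = N / (2 * a)" using a by (simp add: field_simps)
  ultimately have "M \<le> N / (2 * a)" using M(2) by linarith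
  define e where "e = 1 + 1 / D"
  have "1 \<le> e" using D by (simp add: e_def)
  have "M powr e \<le> (N / a / 2) powr e"
    using M(1) \<open>M \<le> N / (2 * a)\<close> \<open>1 \<le> e\<close> by (intro powr_mono2) auto
  also have "\<dots> = (N / a) powr e / 2 powr e" by (rule powr_divide)
  also have "\<dots> \<le> (N / a) powr e / 2"
    using powr_mono[OF \<open>1 \<le> e\<close>, of 2] by (intro divide_left_mono) auto
  also have "(N / a) powr e = N powr (1 + 1 / (2 * D + 1))"
  proof -
    have "N / a = N powr (1 - 1 / (2 * D + 1))" using N by (simp add: a_def powr_diff)
    then show ?thesis using D by (simp add: powr_powr e_def exponent_identity)
  qed
  finally have "M powr e \<le> N powr (1 + 1 / (2 * D + 1)) / 2" .
  moreover have "(G - 1) * N \<le> 6 * a * N" using Ga(2) N by (intro mult_right_mono) auto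
  moreover have "6 * a * N = 6 * N powr (1 + 1 / (2 * D + 1))" using N by (simp add: a_def powr_add)
  moreover have "0 \<le> N powr (1 + 1 / (2 * D + 1))" by simp
  ultimately show ?thesis unfolding e_def by linarith
qed

subsection \<open>Finding a \<open>k\<close>-max\<close>

definition exp_denom :: "nat \<Rightarrow> real" where
  "exp_denom j = 3 * 2 ^ (j - 2) - 1"

lemma exp_denom_ge_2: "2 \<le> exp_denom j"
  using one_le_power[of "2::real" "j - 2"] by (simp add: exp_denom_def)

lemma exp_denom_Suc:
  assumes "2 \<le> j"
  shows "exp_denom (Suc j) = 2 * exp_denom j + 1"
proof -
  have "Suc j - 2 = Suc (j - 2)" using assms by simp
  then show ?thesis by (simp add: exp_denom_def)
qed

definition group_size :: "nat \<Rightarrow> nat \<Rightarrow> nat" where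
  "group_size j N = nat \<lceil>6 * real N powr (1 / exp_denom j)\<rceil>"

lemma group_size_bounds:
  assumes "1 \<le> N"
  shows "6 * real N powr (1 / exp_denom j) \<le> real (group_size j N)"
    and "real (group_size j N) \<le> 6 * real N powr (1 / exp_denom j) + 1"
proof -
  have "0 < real N powr (1 / exp_denom j)" using assms by simp
  then show "6 * real N powr (1 / exp_denom j) \<le> real (group_size j N)"
    and "real (group_size j N) \<le> 6 * real N powr (1 / exp_denom j) + 1"
    unfolding group_size_def by linarith+
qed

text \<open>
  Below 1024 elements the pivot algorithm already meets the bound (\<open>\<surd>N \<le> 32\<close>); from there
  on, the group size is small enough for \<open>six_root_bound\<close>.
\<close>

primrec kmax :: "nat \<Rightarrow> nat list \<Rightarrow> answers \<Rightarrow> alg" where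
  "kmax 0 V R = find_2max_sqrt V R"
| "kmax (Suc j) V R = (if j < 2 \<or> length V < 1024 then find_2max_sqrt V R
     else cover (length V) (group_size (Suc j) (length V)) V R (kmax j))"

lemma valid_kmax_base:
  assumes "2 \<le> j" "j = 2 \<or> length V < 1024" "distinct V" "V \<noteq> []" "consistent x R"
  shows "valid x (find_2max_sqrt V R) (128 * real (length V) powr (1 + 1 / exp_denom j))
           (approx_max x j (set V))"
proof (rule valid_weaken[OF valid_find_2max_sqrt[OF assms(3-5)]])
  have "1 \<le> real (length V)" using assms(4) by (simp add: Suc_le_eq)
  moreover have "exp_denom j = 2 \<or> real (length V) < 1024"
    using assms(2) by (auto simp: exp_denom_def)
  ultimately show
    "4 * real (length V) powr (3 / 2) \<le> 128 * real (length V) powr (1 + 1 / exp_denom j)"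
    using exp_denom_ge_2 by (intro base_cost_bound)
  show "approx_max x 2 (set V) m \<Longrightarrow> approx_max x j (set V) m" for m
    using assms(1) by (auto elim: approx_max_mono)
qed

lemma valid_kmax:
  assumes "2 \<le> j" "distinct V" "V \<noteq> []" "consistent x R"
  shows "valid x (kmax j V R) (128 * real (length V) powr (1 + 1 / exp_denom j))
           (approx_max x j (set V))"
  using assms
proof (induction j arbitrary: V R)
  case 0
  then show ?case by simp
next
  case (Suc j)
  define N where "N = real (length V)"
  have N: "1 \<le> N" using Suc.prems(3) by (simp add: N_def Suc_le_eq)
  show ?case
  proof (cases "j < 2 \<or> length V < 1024")
    case True
    then have "Suc j = 2 \<or> length V < 1024" using Suc.prems(1) by auto
    then show ?thesis
      using True valid_kmax_base[OF Suc.prems(1) _ Suc.prems(2-4)] by (simp add: N_def)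
  next
    case False
    define g where "g = group_size (Suc j) (length V)"
    have g: "6 * N powr (1 / (2 * exp_denom j + 1)) \<le> real g"
      "real g \<le> 6 * N powr (1 / (2 * exp_denom j + 1)) + 1"
      using group_size_bounds[of "length V" "Suc j"] False N
      by (simp_all add: g_def N_def exp_denom_Suc)
    have "valid x (cover (length V) g V R (kmax j)) (128 * N powr (1 + 1 / exp_denom (Suc j))
        - (real g - 1) * N + (real g - 1) * real (length V)) (approx_max x (Suc j) (set V))"
    proof (rule valid_cover)
      have "0 < 6 * N powr (1 / (2 * exp_denom j + 1))" using N by simp
      then have "0 < real g" using g(1) by linarith
      then show "1 \<le> g" by simp
      fix C R' assume C: "consistent x R'" "distinct C" "set C \<subseteq> set V" "covers x C (set V)"
        "real (length C) \<le> 2 * real (length V) / (real g + 1) + real g"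
      have "C \<noteq> []" using C(4) Suc.prems(3) by (cases V) (auto simp: covers_def)
      have "valid x (kmax j C R') (128 * real (length C) powr (1 + 1 / exp_denom j))
          (approx_max x j (set C))"
        using False C(1,2) \<open>C \<noteq> []\<close> by (intro Suc.IH) auto
      moreover have "(real g - 1) * N + 128 * real (length C) powr (1 + 1 / exp_denom j)
          \<le> 128 * N powr (1 + 1 / (2 * exp_denom j + 1))"
        using False C(5) g exp_denom_ge_2[of j] by (intro level_cost_bound) (auto simp: N_def)
      moreover have "approx_max x (Suc j) (set V) m" if "approx_max x j (set C) m" for m
        using approx_max_covers[OF C(4,3) that] by (simp add: add.commute)
      ultimately show
        "valid x (kmax j C R') (128 * N powr (1 + 1 / exp_denom (Suc j)) - (real g - 1) * N)
          (approx_max x (Suc j) (set V))"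
        using False by (auto simp: exp_denom_Suc elim!: valid_weaken)
    qed (use Suc.prems in auto)
    then show ?thesis using False by (simp add: g_def N_def)
  qed
qed

lemma wf_kmax: "0 < n \<Longrightarrow> set V \<subseteq> {..<n} \<Longrightarrow> wf_alg n (kmax j V R)"
proof (induction j arbitrary: V R)
  case 0
  then show ?case by (simp add: wf_find_2max_sqrt)
next
  case (Suc j)
  have "1 \<le> group_size (Suc j) (length V)" if "1024 \<le> length V"
    unfolding group_size_def using that by (intro one_le_nat_ceiling) auto
  then show ?case
    using Suc by (auto simp: wf_find_2max_sqrt intro!: wf_cover)
qed

lemma is_k_max_iff_approx_max: "is_k_max k n x m \<longleftrightarrow> approx_max x k {..<n} m"
  by (auto simp: is_k_max_def approx_max_def k_greater_def diff_le_eq)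

theorem mainTheorem6:
  shows "\<exists>C::real. \<exists>A :: nat \<Rightarrow> nat \<Rightarrow> alg.
     \<forall>k n. 3 \<le> k \<and> real k \<le> log 2 (log 2 (real n)) \<longrightarrow>
       wf_alg n (A k n) \<and>
       (\<forall>x :: nat \<Rightarrow> real. \<forall>(m, c) \<in> runs x (A k n).
          is_k_max (real k) n x m \<and>
          real c \<le> C * real n powr (1 + 1 / (3 * 2 ^ (k - 2) - 1)))"
proof -
  have main: "wf_alg n (kmax k [0..<n] {}) \<and>
      (\<forall>x. \<forall>(m, c) \<in> runs x (kmax k [0..<n] {}).
         is_k_max (real k) n x m \<and> real c \<le> 128 * real n powr (1 + 1 / (3 * 2 ^ (k - 2) - 1)))"
    if kn: "3 \<le> k \<and> real k \<le> log 2 (log 2 (real n))" for k n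
  proof -
    \<comment> \<open>The bound on \<open>k\<close> is only needed to exclude \<open>n = 0\<close>.\<close>
    have "0 < n" using kn by (cases n) (auto simp: log_def)
    have valid: "valid x (kmax k [0..<n] {}) (128 * real n powr (1 + 1 / exp_denom k))
        (approx_max x k {..<n})" for x
      using kn \<open>0 < n\<close> valid_kmax[of k "[0..<n]" x "{}"]
      by (auto simp: consistent_def atLeast0LessThan)
    have "is_k_max (real k) n x m \<and> real c \<le> 128 * real n powr (1 + 1 / (3 * 2 ^ (k - 2) - 1))"
      if "(m, c) \<in> runs x (kmax k [0..<n] {})" for x m c
      using valid[of x] that by (auto simp: valid_def is_k_max_iff_approx_max exp_denom_def)
    moreover have "wf_alg n (kmax k [0..<n] {})" using \<open>0 < n\<close> by (intro wf_kmax) auto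
    ultimately show ?thesis by auto
  qed
  show ?thesis
    by (intro exI[of _ 128] exI[of _ "\<lambda>k n. kmax k [0..<n] {}"] allI impI) (rule main)
qed

end
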